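(* Let $\mathcal{G}=(\mathcal{V},\mathcal{E})$ be an undirected weighted graph with nodes $\mathcal{V}=\{1,\ldots,n\}$, where each edge $\{i,i'\}\in\mathcal{E}$ ($i\neq i'$) carries a weight $A_{i,i'}=A_{i',i}>0$. For each node $i\in\mathcal{V}$ let $L_i:\mathbb{R}^d\to[0,\infty)$ be a non-negative local loss function. Let $\alpha>0$, and let $\{\widehat{\mathbf{w}}^{(i)}\}_{i=1}^n$, with $\widehat{\mathbf{w}}^{(i)}\in\mathbb{R}^d$, be any solution of the GTVMin problem $$\{\widehat{\mathbf{w}}^{(i)}\}_{i=1}^n\in\operatorname*{argmin}_{\mathbf{w}^{(1)},\ldots,\mathbf{w}^{(n)}\in\mathbb{R}^d}\Big[\sum_{i\in\mathcal{V}}L_i(\mathbf{w}^{(i)})+\alpha\sum_{\{i,i'\}\in\mathcal{E}}A_{i,i'}\|\mathbf{w}^{(i)}-\mathbf{w}^{(i')}\|_2^2\Big].$$ Let $\mathcal{C}\subseteq\mathcal{V}$ be a nonempty set of nodes (a cluster) for which there exist a vector $\overline{\mathbf{w}}^{(\mathcal{C})}\in\mathbb{R}^d$ and a number $\varepsilon^{(\mathcal{C})}\ge 0$ with $$\sum_{i\in\mathcal{C}}L_i\big(\overline{\mathbf{w}}^{(\mathcal{C})}\big)\le\varepsilon^{(\mathcal{C})}.$$ Assume $\lambda_2(\mathcal{C})>0$, where $\lambda_2(\mathcal{C})$ is the second smallest eigenvalue of the Laplacian matrix $\mathbf{L}^{(\mathcal{C})}$ of the induced subgraph $\mathcal{G}^{(\mathcal{C})}$.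 Let $R\ge 0$ satisfy $\max_{i\in\mathcal{V}\setminus\mathcal{C}}\|\widehat{\mathbf{w}}^{(i)}\|_2\le R$ (any $R\ge0$ if $\mathcal{C}=\mathcal{V}$). Define, for $i\in\mathcal{C}$, $\widetilde{\mathbf{w}}^{(i)}:=\widehat{\mathbf{w}}^{(i)}-\frac{1}{|\mathcal{C}|}\sum_{i'\in\mathcal{C}}\widehat{\mathbf{w}}^{(i')}$. Then $$\sum_{i\in\mathcal{C}}\|\widetilde{\mathbf{w}}^{(i)}\|_2^2\le\frac{1}{\alpha\,\lambda_2(\mathcal{C})}\Big[\varepsilon^{(\mathcal{C})}+2\alpha\,|\partial\mathcal{C}|\big(\|\overline{\mathbf{w}}^{(\mathcal{C})}\|_2^2+R^2\big)\Big],$$ where $|\partial\mathcal{C}|:=\sum_{\{i,i'\}\in\partial\mathcal{C}}A_{i,i'}$ with $\partial\mathcal{C}:=\{\{i,i'\}\in\mathcal{E}: i\in\mathcal{C},\ i'\notin\mathcal{C}\}$.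
   Context: The induced subgraph $\mathcal{G}^{(\mathcal{C})}$ has node set $\mathcal{C}$ and all edges $\{i,i'\}\in\mathcal{E}$ with $i,i'\in\mathcal{C}$, with the same weights. Its Laplacian is $\mathbf{L}^{(\mathcal{C})}=\mathbf{D}-\mathbf{A}$, where $\mathbf{A}$ is the weighted adjacency matrix of $\mathcal{G}^{(\mathcal{C})}$ (entry $A_{i,i'}$ for edges, $0$ otherwise) and $\mathbf{D}$ is the diagonal matrix of weighted degrees $\sum_{i'\in\mathcal{C}}A_{i,i'}$. The quantity $|\partial\mathcal{C}|$ is called the cluster boundary (total weight of edges leaving $\mathcal{C}$); when $\mathcal{C}=\mathcal{V}$ it equals $0$. *)

theory Defs
  imports "HOL-Analysis.Analysis" "Jordan_Normal_Form.Char_Poly"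
begin

definition wgraph :: "nat \<Rightarrow> (nat \<Rightarrow> nat \<Rightarrow> real) \<Rightarrow> bool" where
  "wgraph n A \<longleftrightarrow> (\<forall>i j. A i j = A j i) \<and> (\<forall>i j. A i j \<ge> 0) \<and> (\<forall>i. A i i = 0)
     \<and> (\<forall>i j. A i j \<noteq> 0 \<longrightarrow> i \<in> {1..n} \<and> j \<in> {1..n})"

text \<open>Edge set: unordered pairs, each listed once as (i,j) with i < j.\<close>
definition edges :: "nat \<Rightarrow> (nat \<Rightarrow> nat \<Rightarrow> real) \<Rightarrow> (nat \<times> nat) set" where
  "edges n A = {(i,j). i \<in> {1..n} \<and> j \<in> {1..n} \<and> i < j \<and> A i j > 0}"

definition gtv_obj :: "nat \<Rightarrow> (nat \<Rightarrow> nat \<Rightarrow> real) \<Rightarrow> (nat \<Rightarrow> real^'d \<Rightarrow> real) \<Rightarrow> real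
    \<Rightarrow> (nat \<Rightarrow> real^'d) \<Rightarrow> real" where
  "gtv_obj n A L \<alpha> w = (\<Sum>i\<in>{1..n}. L i (w i))
      + \<alpha> * (\<Sum>(i,j)\<in>edges n A. A i j * (norm (w i - w j))\<^sup>2)"

definition is_gtvmin_solution :: "nat \<Rightarrow> (nat \<Rightarrow> nat \<Rightarrow> real) \<Rightarrow> (nat \<Rightarrow> real^'d \<Rightarrow> real) \<Rightarrow> real
    \<Rightarrow> (nat \<Rightarrow> real^'d) \<Rightarrow> bool" where
  "is_gtvmin_solution n A L \<alpha> w \<longleftrightarrow>
     (\<forall>w'. gtv_obj n A L \<alpha> w \<le> gtv_obj n A L \<alpha> w')"

text \<open>Laplacian of the induced subgraph on C, rows/columns indexed by the
  elements of C in increasing order.\<close>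
definition laplacian :: "(nat \<Rightarrow> nat \<Rightarrow> real) \<Rightarrow> nat set \<Rightarrow> real mat" where
  "laplacian A C = (let e = sorted_list_of_set C in
     Matrix.mat (card C) (card C) (\<lambda>(a,b). if a = b then (\<Sum>j\<in>C. A (e!a) j) else - A (e!a) (e!b)))"

text \<open>Eigenvalues with algebraic multiplicity, in increasing order (the
  Laplacian is real symmetric, so all eigenvalues are real roots of the
  characteristic polynomial).\<close>
definition sorted_eigenvalues :: "real mat \<Rightarrow> real list" where
  "sorted_eigenvalues M = sorted_list_of_multiset (Abs_multiset (\<lambda>x. order x (char_poly M)))"

definition lambda2 :: "(nat \<Rightarrow> nat \<Rightarrow> real) \<Rightarrow> nat set \<Rightarrow> real" where
  "lambda2 A C = sorted_eigenvalues (laplacian A C) ! 1"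

definition boundary_weight :: "nat \<Rightarrow> (nat \<Rightarrow> nat \<Rightarrow> real) \<Rightarrow> nat set \<Rightarrow> real" where
  "boundary_weight n A C = (\<Sum>i\<in>C. \<Sum>j\<in>{1..n} - C. A i j)"

end

theory Submission
  imports Defs
begin

text \<open>Comparing the GTVMin solution \<open>w\<close> with the competitor that equals \<open>wbar\<close> on \<open>C\<close>
  and agrees with \<open>w\<close> elsewhere bounds \<alpha> times the variation of \<open>w\<close> inside \<open>C\<close> by
  \<open>\<epsilon> + 2\<alpha>|\<partial>C|(|wbar|\<^sup>2 + R\<^sup>2)\<close>: the losses are non-negative, the edges outside
  \<open>C\<close> contribute equally to both objectives, and every boundary edge of the competitor has
  length at most |wbar| + R. The variation inside \<open>C\<close> is the quadratic form of the Laplacian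
  of the induced subgraph, applied coordinatewise to the centred vectors; these are orthogonal
  to the kernel vector 1, so the form is at least \<open>\<lambda>\<^sub>2\<close> times their squared norm.

  For this Courant--Fischer step, the minimum \<mu> of the Rayleigh quotient on zero-sum vectors
  is attained by compactness, and a first-order argument makes the minimiser an eigenvector
  for \<mu>. Then \<open>\<lambda>\<^sub>2 \<le> \<mu>\<close>, since 0 and \<mu> are eigenvalues; if \<mu> = 0, the kernel contains a
  zero-sum vector besides 1, so every principal minor of the Laplacian is singular and 0 is a
  double root of the characteristic polynomial.\<close>

section \<open>Laplacian quadratic forms\<close>

text \<open>Weights \<open>B\<close> on the index set \<open>{..<m}\<close>; vectors are functions \<open>nat \<Rightarrow> real\<close>, only
  their first \<open>m\<close> entries matter.\<close>

definition lap_apply :: "nat \<Rightarrow> (nat \<Rightarrow> nat \<Rightarrow> real) \<Rightarrow> (nat \<Rightarrow> real) \<Rightarrow> nat \<Rightarrow> real" where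
  "lap_apply m B y a = (\<Sum>b<m. B a b * (y a - y b))"

definition lap_form :: "nat \<Rightarrow> (nat \<Rightarrow> nat \<Rightarrow> real) \<Rightarrow> (nat \<Rightarrow> real) \<Rightarrow> real" where
  "lap_form m B y = (\<Sum>a<m. \<Sum>b<m. B a b * (y a - y b)^2) / 2"

definition lap_bilinear :: "nat \<Rightarrow> (nat \<Rightarrow> nat \<Rightarrow> real) \<Rightarrow> (nat \<Rightarrow> real) \<Rightarrow> (nat \<Rightarrow> real) \<Rightarrow> real" where
  "lap_bilinear m B y z = (\<Sum>a<m. \<Sum>b<m. B a b * (y a - y b) * (z a - z b)) / 2"

definition lap_mat :: "nat \<Rightarrow> (nat \<Rightarrow> nat \<Rightarrow> real) \<Rightarrow> real mat" where
  "lap_mat m B = Matrix.mat m m (\<lambda>(a,b). if a = b then (\<Sum>c<m. B a c) else - B a b)"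

lemma sum_mult_lap_apply:
  assumes sym: "\<forall>a b. B a b = B b a"
  shows "(\<Sum>a<m. z a * lap_apply m B y a) = lap_bilinear m B y z"
proof -
  let ?S = "\<lambda>f. \<Sum>a<m. \<Sum>b<m. B a b * (y a - y b) * f a b"
  have lhs: "(\<Sum>a<m. z a * lap_apply m B y a) = ?S (\<lambda>a b. z a)"
    by (simp add: lap_apply_def sum_distrib_left mult_ac)
  have "?S (\<lambda>a b. z a) = (\<Sum>b<m. \<Sum>a<m. B a b * (y a - y b) * z a)"
    by (rule sum.swap)
  also have "\<dots> = ?S (\<lambda>a b. - z b)"
    by (intro sum.cong refl) (simp add: sym[rule_format, of b a for a b] algebra_simps)
  finally have "2 * ?S (\<lambda>a b. z a) = ?S (\<lambda>a b. z a) + ?S (\<lambda>a b. - z b)"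
    by simp
  also have "\<dots> = ?S (\<lambda>a b. z a - z b)"
    by (simp add: sum.distrib[symmetric] algebra_simps)
  finally show ?thesis
    unfolding lhs lap_bilinear_def by simp
qed

lemma lap_form_add_scaled:
  "lap_form m B (\<lambda>a. y a + t * z a) = lap_form m B y + 2 * t * lap_bilinear m B y z + t^2 * lap_form m B z"
proof -
  have "\<And>a b. B a b * ((y a + t * z a) - (y b + t * z b))^2
      = B a b * (y a - y b)^2 + 2 * t * (B a b * (y a - y b) * (z a - z b)) + t^2 * (B a b * (z a - z b)^2)"
    by (simp add: power2_eq_square algebra_simps)
  then show ?thesis
    unfolding lap_form_def lap_bilinear_def by (simp add: sum.distrib sum_distrib_left add_divide_distrib)
qed

lemma lap_form_nonneg: "\<forall>a b. B a b \<ge> 0 \<Longrightarrow> lap_form m B y \<ge> 0"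
  unfolding lap_form_def by (auto intro!: sum_nonneg divide_nonneg_nonneg)

lemma lap_form_cong: "\<forall>a<m. y a = y' a \<Longrightarrow> lap_form m B y = lap_form m B y'"
  unfolding lap_form_def by (intro arg_cong[where f="\<lambda>x. x / 2"] sum.cong refl) auto

lemma lap_form_scale: "lap_form m B (\<lambda>a. c * y a) = c^2 * lap_form m B y"
proof -
  have e: "\<And>a b. B a b * (c * y a - c * y b)^2 = c^2 * (B a b * (y a - y b)^2)"
    by (simp add: power2_eq_square algebra_simps)
  show ?thesis
    unfolding lap_form_def e by (simp add: sum_distrib_left)
qed

lemma linear_coeff_zero_if_quadratic_nonneg:
  fixes b c :: real
  assumes "\<forall>t. 0 \<le> 2 * t * b + t^2 * c"
  shows "b = 0"
proof (rule ccontr)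
  assume b: "b \<noteq> 0"
  define s where "s = 1 / (\<bar>c\<bar> + 1)"
  have s: "s > 0" "s * c < 2"
    unfolding s_def by (auto simp: field_simps abs_if)
  have "0 \<le> 2 * (- s * b) * b + (- s * b)^2 * c"
    using assms by blast
  also have "\<dots> = s * b^2 * (s * c - 2)"
    by (simp add: power2_eq_square algebra_simps)
  also have "\<dots> < 0"
    using s b by (intro mult_pos_neg) auto
  finally show False by simp
qed

subsection \<open>The Rayleigh quotient on zero-sum vectors\<close>

text \<open>The entries beyond \<open>m\<close> are pinned to \<open>0\<close> so that the set is compact in the
  product topology of \<open>nat \<Rightarrow> real\<close>.\<close>

definition zero_sum_sphere :: "nat \<Rightarrow> (nat \<Rightarrow> real) set" where
  "zero_sum_sphere m = {y. (\<forall>a. y a \<in> (if a < m then {-1..1} else {0}))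
     \<and> (\<Sum>a<m. y a) = 0 \<and> (\<Sum>a<m. (y a)^2) = 1}"

lemma continuous_on_fun_apply [continuous_intros]: "continuous_on S (\<lambda>x::nat \<Rightarrow> real. x i)"
  by (rule continuous_on_subset[OF continuous_on_product_coordinates]) simp

lemma compact_zero_sum_sphere: "compact (zero_sum_sphere m)"
proof -
  let ?box = "PiE UNIV (\<lambda>a. if a < m then {-1..(1::real)} else {0})"
  have "compactin (product_topology (\<lambda>_. euclidean) UNIV) ?box"
    by (subst compactin_PiE) auto
  then have "compact ?box"
    by (simp add: euclidean_product_topology)
  moreover have "closed {y::nat \<Rightarrow> real. (\<Sum>a<m. y a) = 0 \<and> (\<Sum>a<m. (y a)^2) = 1}"
    by (intro closed_Collect_conj closed_Collect_eq) (auto intro!: continuous_intros)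
  ultimately have "compact (?box \<inter> {y. (\<Sum>a<m. y a) = 0 \<and> (\<Sum>a<m. (y a)^2) = 1})"
    by (rule compact_Int_closed)
  also have "?box \<inter> {y. (\<Sum>a<m. y a) = 0 \<and> (\<Sum>a<m. (y a)^2) = 1} = zero_sum_sphere m"
    unfolding zero_sum_sphere_def by (auto simp: PiE_def Pi_def)
  finally show ?thesis .
qed

lemma zero_sum_sphere_nonempty:
  assumes "m \<ge> 2"
  shows "zero_sum_sphere m \<noteq> {}"
proof -
  define y :: "nat \<Rightarrow> real" where "y = (\<lambda>a. if a = 0 then 1 / sqrt 2 else if a = 1 then - 1 / sqrt 2 else 0)"
  have split: "{..<m} = {0,1} \<union> {2..<m}"
    using assms by auto
  have "(\<Sum>a<m. y a) = 0" "(\<Sum>a<m. (y a)^2) = 1"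
    unfolding split by (subst sum.union_disjoint; auto simp: y_def power_divide)+
  moreover have "1 / sqrt 2 \<le> (1::real)"
    by (simp add: divide_le_eq_1 real_sqrt_ge_one)
  moreover have "-1 \<le> 1 / sqrt (2::real)"
    by (rule order_trans[of _ 0]) auto
  ultimately have "y \<in> zero_sum_sphere m"
    using assms unfolding zero_sum_sphere_def by (auto simp: y_def)
  then show ?thesis by blast
qed

lemma normalize_in_zero_sum_sphere:
  assumes zs: "(\<Sum>a<m. z a) = 0" and pos: "(\<Sum>a<m. (z a)^2) > 0"
  shows "(\<lambda>a. if a < m then z a / sqrt (\<Sum>a<m. (z a)^2) else 0) \<in> zero_sum_sphere m"
proof -
  define s where "s = (\<Sum>a<m. (z a)^2)"
  have r: "sqrt s > 0" "(sqrt s)^2 = s"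
    using pos unfolding s_def by auto
  have "z a / sqrt s \<in> {-1..1}" if "a < m" for a
  proof -
    have "(z a)^2 \<le> s"
      unfolding s_def using that by (intro member_le_sum) auto
    then have "(z a / sqrt s)^2 \<le> 1"
      using r by (simp add: power_divide)
    then have "\<bar>z a / sqrt s\<bar> \<le> 1"
      by (metis abs_le_square_iff abs_one one_power2)
    then show ?thesis
      by (simp add: abs_le_iff del: abs_divide)
  qed
  moreover have "(\<Sum>a<m. z a / sqrt s) = 0"
    using zs by (simp add: sum_divide_distrib[symmetric])
  moreover have "(\<Sum>a<m. (z a / sqrt s)^2) = 1"
    using r pos by (simp add: power_divide sum_divide_distrib[symmetric] s_def[symmetric])
  ultimately show ?thesis
    unfolding zero_sum_sphere_def s_def[symmetric] by auto
qed

lemma lap_form_attains_min_on_zero_sum: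
  assumes nn: "\<forall>a b. B a b \<ge> 0" and m2: "m \<ge> 2"
  obtains y where "(\<Sum>a<m. y a) = 0" "(\<Sum>a<m. (y a)^2) = 1"
    "\<And>z. (\<Sum>a<m. z a) = 0 \<Longrightarrow> lap_form m B y * (\<Sum>a<m. (z a)^2) \<le> lap_form m B z"
proof -
  have "continuous_on (zero_sum_sphere m) (lap_form m B)"
    unfolding lap_form_def by (intro continuous_intros) auto
  then obtain y where y: "y \<in> zero_sum_sphere m"
    and min: "\<And>u. u \<in> zero_sum_sphere m \<Longrightarrow> lap_form m B y \<le> lap_form m B u"
    using continuous_attains_inf[OF compact_zero_sum_sphere zero_sum_sphere_nonempty[OF m2]] by blast
  have "lap_form m B y * (\<Sum>a<m. (z a)^2) \<le> lap_form m B z" if zs: "(\<Sum>a<m. z a) = 0" for z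
  proof (cases "(\<Sum>a<m. (z a)^2) = 0")
    case True
    then show ?thesis
      using lap_form_nonneg[where B=B, OF nn] by simp
  next
    case False
    define s where "s = (\<Sum>a<m. (z a)^2)"
    have spos: "s > 0"
      using False unfolding s_def by (metis less_eq_real_def sum_nonneg zero_le_power2)
    have "lap_form m B y \<le> lap_form m B (\<lambda>a. if a < m then z a / sqrt s else 0)"
      using min normalize_in_zero_sum_sphere[OF zs] spos unfolding s_def by blast
    also have "\<dots> = lap_form m B (\<lambda>a. (1 / sqrt s) * z a)"
      by (rule lap_form_cong) auto
    also have "\<dots> = lap_form m B z / s"
      unfolding lap_form_scale using spos by (simp add: power_divide)
    finally show ?thesis
      using spos unfolding s_def[symmetric] by (simp add: pos_le_divide_eq mult.commute)
  qed
  with y that show ?thesis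
    unfolding zero_sum_sphere_def by blast
qed

text \<open>First-order condition: perturbing \<open>y\<close> along a zero-sum \<open>z\<close> shows that
  \<open>L y - \<mu> y\<close> is orthogonal to all zero-sum vectors, and it is itself one.\<close>

lemma lap_apply_minimizer:
  assumes sym: "\<forall>a b. B a b = B b a"
    and y0: "(\<Sum>a<m. y a) = 0" and y1: "(\<Sum>a<m. (y a)^2) = 1"
    and min: "\<And>z. (\<Sum>a<m. z a) = 0 \<Longrightarrow> lap_form m B y * (\<Sum>a<m. (z a)^2) \<le> lap_form m B z"
  shows "\<forall>a<m. lap_apply m B y a = lap_form m B y * y a"
proof -
  define \<mu> where "\<mu> = lap_form m B y"
  have orth: "lap_bilinear m B y z = \<mu> * (\<Sum>a<m. y a * z a)" if zs: "(\<Sum>a<m. z a) = 0" for z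
  proof -
    have "0 \<le> 2 * t * (lap_bilinear m B y z - \<mu> * (\<Sum>a<m. y a * z a))
        + t^2 * (lap_form m B z - \<mu> * (\<Sum>a<m. (z a)^2))" for t
    proof -
      have "(\<Sum>a<m. y a + t * z a) = 0"
        using y0 zs by (simp add: sum.distrib sum_distrib_left[symmetric])
      from min[OF this] have "\<mu> * (\<Sum>a<m. (y a + t * z a)^2) \<le> lap_form m B (\<lambda>a. y a + t * z a)"
        unfolding \<mu>_def .
      moreover have "(\<Sum>a<m. (y a + t * z a)^2)
          = (\<Sum>a<m. (y a)^2) + 2 * t * (\<Sum>a<m. y a * z a) + t^2 * (\<Sum>a<m. (z a)^2)"
        by (simp add: power2_eq_square algebra_simps sum.distrib sum_distrib_left)
      ultimately show ?thesis
        unfolding lap_form_add_scaled y1 \<mu>_def[symmetric] by (simp add: algebra_simps)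
    qed
    then show ?thesis
      using linear_coeff_zero_if_quadratic_nonneg by fastforce
  qed
  define r where "r = (\<lambda>a. lap_apply m B y a - \<mu> * y a)"
  have "(\<Sum>a<m. lap_apply m B y a) = lap_bilinear m B y (\<lambda>_. 1)"
    using sum_mult_lap_apply[where B=B, OF sym, of "\<lambda>_. 1"] by simp
  then have "(\<Sum>a<m. lap_apply m B y a) = 0"
    unfolding lap_bilinear_def by simp
  then have "(\<Sum>a<m. r a) = 0"
    unfolding r_def using y0 by (simp add: sum_subtractf sum_distrib_left[symmetric])
  then have "(\<Sum>a<m. r a * lap_apply m B y a) = \<mu> * (\<Sum>a<m. y a * r a)"
    using orth sum_mult_lap_apply[where B=B, OF sym, of r] by simp
  then have "(\<Sum>a<m. r a * r a) = 0"
    unfolding r_def by (simp add: algebra_simps sum_subtractf sum_distrib_left sum.distrib)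
  then have "\<forall>a\<in>{..<m}. r a * r a = 0"
    by (subst sum_nonneg_eq_0_iff[symmetric]) auto
  then show ?thesis
    unfolding r_def \<mu>_def by auto
qed

subsection \<open>The Laplacian matrix and its characteristic polynomial\<close>

lemma lap_mat_carrier: "lap_mat m B \<in> carrier_mat m m"
  unfolding lap_mat_def by simp

lemma lap_mat_dim [simp]: "dim_row (lap_mat m B) = m" "dim_col (lap_mat m B) = m"
  unfolding lap_mat_def by simp_all

lemma lap_mat_mult_vec:
  assumes diag: "\<forall>a. B a a = 0"
  shows "lap_mat m B *\<^sub>v vec m y = vec m (lap_apply m B y)"
proof (rule eq_vecI)
  fix a assume "a < dim_vec (vec m (lap_apply m B y))"
  then have a: "a < m" by simp
  have "(lap_mat m B *\<^sub>v vec m y) $ a = (\<Sum>b\<in>{0..<m}. lap_mat m B $$ (a,b) * y b)"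
    using a by (simp add: lap_mat_def scalar_prod_def)
  also have "\<dots> = (\<Sum>b\<in>{0..<m}. (if a = b then (\<Sum>c<m. B a c) * y a else 0) - B a b * y b)"
    using a diag by (intro sum.cong refl) (auto simp: lap_mat_def algebra_simps)
  also have "\<dots> = lap_apply m B y a"
    using a unfolding lap_apply_def
    by (simp add: sum_subtractf atLeast0LessThan sum_distrib_left algebra_simps)
  finally show "(lap_mat m B *\<^sub>v vec m y) $ a = vec m (lap_apply m B y) $ a"
    using a by simp
qed (simp add: lap_mat_def)

lemma char_poly_root_if_eigenvector:
  fixes M :: "real mat"
  assumes M: "M \<in> carrier_mat n n" and ev: "M *\<^sub>v vec n y = \<mu> \<cdot>\<^sub>v vec n y"
    and nz: "\<exists>a<n. y a \<noteq> 0"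
  shows "poly (char_poly M) \<mu> = 0"
proof -
  have "vec n y \<noteq> 0\<^sub>v n"
    using nz by (auto simp: vec_eq_iff)
  then have "eigenvector M (vec n y) \<mu>"
    unfolding eigenvector_def using M ev by auto
  then have "eigenvalue M \<mu>"
    unfolding eigenvalue_def by blast
  then show ?thesis
    using eigenvalue_root_char_poly[OF M] by simp
qed

lemma lap_mat_char_poly_root:
  assumes diag: "\<forall>a. B a a = 0" and ev: "\<forall>a<m. lap_apply m B y a = \<mu> * y a"
    and nz: "\<exists>a<m. y a \<noteq> 0"
  shows "poly (char_poly (lap_mat m B)) \<mu> = 0"
  by (rule char_poly_root_if_eigenvector[OF lap_mat_carrier _ nz])
    (use ev in \<open>auto simp: lap_mat_mult_vec[where B=B, OF diag] vec_eq_iff\<close>)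

lemma lap_mat_char_poly_root_0:
  assumes "\<forall>a. B a a = 0" and "m \<ge> 1"
  shows "poly (char_poly (lap_mat m B)) 0 = 0"
  by (rule lap_mat_char_poly_root[where B=B and y="\<lambda>_. 1", OF assms(1)])
    (use assms(2) in \<open>auto simp: lap_apply_def intro!: exI[of _ 0]\<close>)

lemma sum_insert_index:
  fixes f :: "nat \<Rightarrow> real"
  assumes i: "i < m" and fi: "f i = 0"
  shows "(\<Sum>k<m-1. f (insert_index i k)) = (\<Sum>b<m. f b)"
proof -
  have inj: "inj_on (insert_index i) {..<m-1}"
    unfolding insert_index_def inj_on_def by auto
  have "insert_index i ` {..<m-1} = {..<m} - {i}"
  proof
    show "insert_index i ` {..<m-1} \<subseteq> {..<m} - {i}"
      using i unfolding insert_index_def by auto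
    show "{..<m} - {i} \<subseteq> insert_index i ` {..<m-1}"
    proof
      fix b assume b: "b \<in> {..<m} - {i}"
      then have "insert_index i (delete_index i b) = b"
        by (intro insert_delete_index) auto
      moreover have "delete_index i b < m - 1"
        using b i unfolding delete_index_def by auto
      ultimately show "b \<in> insert_index i ` {..<m-1}"
        by (metis image_eqI lessThan_iff)
    qed
  qed
  then have "(\<Sum>k<m-1. f (insert_index i k)) = (\<Sum>b\<in>{..<m} - {i}. f b)"
    using sum.reindex[OF inj, of f] by simp
  also have "\<dots> = (\<Sum>b<m. f b)"
    using fi i by (simp add: sum_diff1)
  finally show ?thesis .
qed

text \<open>A kernel vector vanishing at \<open>i\<close> restricts to a kernel vector of the principal
  minor obtained by deleting row and column \<open>i\<close>.\<close>

lemma lap_mat_delete_char_poly_root_0: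
  assumes diag: "\<forall>a. B a a = 0" and i: "i < m"
    and ker: "\<forall>a<m. lap_apply m B z a = 0" and zi: "z i = 0" and nz: "\<exists>a<m. z a \<noteq> 0"
  shows "poly (char_poly (mat_delete (lap_mat m B) i i)) 0 = 0"
proof -
  let ?L = "lap_mat m B"
  define v where "v = (\<lambda>k. z (insert_index i k))"
  have Md: "mat_delete ?L i i \<in> carrier_mat (m-1) (m-1)"
    using mat_delete_carrier[OF lap_mat_carrier] .
  have "mat_delete ?L i i *\<^sub>v vec (m-1) v = 0 \<cdot>\<^sub>v vec (m-1) v"
  proof (rule eq_vecI)
    fix k assume "k < dim_vec (0 \<cdot>\<^sub>v vec (m-1) v)"
    then have k: "k < m - 1" by simp
    have ik: "insert_index i k < m"
      using k i unfolding insert_index_def by auto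
    have "(mat_delete ?L i i *\<^sub>v vec (m-1) v) $ k
        = (\<Sum>k'\<in>{0..<m-1}. mat_delete ?L i i $$ (k,k') * v k')"
      using k Md by (simp add: scalar_prod_def)
    also have "\<dots> = (\<Sum>k'<m-1. (\<lambda>b. ?L $$ (insert_index i k, b) * z b) (insert_index i k'))"
      using k i unfolding atLeast0LessThan
      by (intro sum.cong refl) (auto simp: mat_delete_def lap_mat_def v_def insert_index_def)
    also have "\<dots> = (\<Sum>b<m. ?L $$ (insert_index i k, b) * z b)"
      by (rule sum_insert_index[OF i]) (simp add: zi)
    also have "\<dots> = (?L *\<^sub>v vec m z) $ (insert_index i k)"
      using ik by (simp add: lap_mat_def scalar_prod_def atLeast0LessThan)
    also have "\<dots> = 0"
      using ker ik unfolding lap_mat_mult_vec[where B=B, OF diag] by simp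
    finally show "(mat_delete ?L i i *\<^sub>v vec (m-1) v) $ k = (0 \<cdot>\<^sub>v vec (m-1) v) $ k"
      using k by simp
  qed (use Md in simp)
  moreover have "\<exists>k<m-1. v k \<noteq> 0"
  proof -
    obtain a where a: "a < m" "z a \<noteq> 0"
      using nz by blast
    then have ai: "a \<noteq> i"
      using zi by auto
    then have "insert_index i (delete_index i a) = a"
      by (rule insert_delete_index)
    moreover have "delete_index i a < m - 1"
      using a ai i unfolding delete_index_def by auto
    ultimately show ?thesis
      using a unfolding v_def by metis
  qed
  ultimately show ?thesis
    by (rule char_poly_root_if_eigenvector[OF Md])
qed

text \<open>The derivative of the characteristic polynomial is the sum of the characteristic
  polynomials of the principal minors, so it also vanishes at \<open>0\<close>.\<close>

lemma lap_mat_order_0_ge_2: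
  assumes sym: "\<forall>a b. B a b = B b a" and diag: "\<forall>a. B a a = 0" and m2: "m \<ge> 2"
    and ker: "\<forall>a<m. lap_apply m B y a = 0" and ys: "(\<Sum>a<m. y a) = 0"
    and nz: "\<exists>a<m. y a \<noteq> 0"
  shows "order 0 (char_poly (lap_mat m B)) \<ge> 2"
proof -
  let ?p = "char_poly (lap_mat m B)"
  have deg: "degree ?p = m" and lc: "coeff ?p m = 1"
    using degree_monic_char_poly[OF lap_mat_carrier] by auto
  have minor_root: "poly (char_poly (mat_delete (lap_mat m B) i i)) 0 = 0" if i: "i < m" for i
  proof (rule lap_mat_delete_char_poly_root_0[where B=B, OF diag i])
    have "lap_apply m B (\<lambda>a. y i - y a) a = - lap_apply m B y a" for a
      unfolding lap_apply_def by (simp add: sum_negf[symmetric] algebra_simps)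
    then show "\<forall>a<m. lap_apply m B (\<lambda>a. y i - y a) a = 0"
      using ker by simp
    show "\<exists>a<m. y i - y a \<noteq> 0"
    proof (rule ccontr)
      assume "\<not> ?thesis"
      then have const: "\<forall>a<m. y a = y i" by auto
      then have "of_nat m * y i = 0"
        using ys by simp
      then show False
        using const nz m2 by auto
    qed
  qed simp
  have "poly (pderiv ?p) 0 = (\<Sum>i<m. poly (char_poly (mat_delete (lap_mat m B) i i)) 0)"
    unfolding pderiv_char_poly[OF lap_mat_carrier] by (simp add: poly_sum)
  also have "\<dots> = 0"
    using minor_root by simp
  finally have "poly (pderiv ?p) 0 = 0" .
  moreover have "pderiv ?p \<noteq> 0"
    using deg m2 by (simp add: pderiv_eq_0_iff)
  ultimately have "order 0 (pderiv ?p) \<noteq> 0"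
    using order_root by blast
  moreover have "order 0 ?p = Suc (order 0 (pderiv ?p))"
    using lc m2 lap_mat_char_poly_root_0[where B=B, OF diag] by (intro order_pderiv) auto
  ultimately show ?thesis by simp
qed

lemma sorted_nth_1_le_max:
  fixes xs :: "real list"
  assumes s: "sorted xs" and sub: "{#u, v#} \<subseteq># mset xs"
  shows "xs ! 1 \<le> max u v"
proof (rule ccontr)
  assume c: "\<not> xs ! 1 \<le> max u v"
  have "size {#u,v#} \<le> size (mset xs)"
    using sub by (rule size_mset_mono)
  then obtain x0 x1 rest where xs: "xs = x0 # x1 # rest"
    by (cases xs rule: remdups_adj.cases) auto
  have "\<forall>z\<in>set (x1 # rest). z > max u v"
    using s c unfolding xs by auto
  then have "count (mset xs) u = (if x0 = u then 1 else 0)" "count (mset xs) v = (if x0 = v then 1 else 0)"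
    unfolding xs by (auto simp: count_eq_zero_iff)
  moreover have "count {#u,v#} u \<le> count (mset xs) u" "count {#u,v#} v \<le> count (mset xs) v"
    using mset_subset_eq_count[OF sub, of u] mset_subset_eq_count[OF sub, of v] by auto
  ultimately show False
    by (cases "u = v") (auto split: if_splits)
qed

lemma count_Abs_multiset_order:
  fixes p :: "real poly"
  assumes "p \<noteq> 0"
  shows "count (Abs_multiset (\<lambda>x. order x p)) x = order x p"
proof -
  have "{x. 0 < order x p} \<subseteq> {x. poly p x = 0}"
    using order_root by auto
  then have "finite {x. 0 < order x p}"
    using poly_roots_finite[OF assms] by (rule finite_subset)
  then show ?thesis
    by simp
qed

lemma sorted_eigenvalues_nth_1_le:
  fixes M :: "real mat"
  assumes M: "M \<in> carrier_mat n n" and cnt: "\<forall>x. count {#u, v#} x \<le> order x (char_poly M)"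
  shows "sorted_eigenvalues M ! 1 \<le> max u v"
proof -
  have "char_poly M \<noteq> 0"
    using degree_monic_char_poly[OF M] by auto
  then have "{#u, v#} \<subseteq># Abs_multiset (\<lambda>x. order x (char_poly M))"
    using cnt by (simp add: subseteq_mset_def count_Abs_multiset_order)
  then show ?thesis
    unfolding sorted_eigenvalues_def by (intro sorted_nth_1_le_max) auto
qed

lemma sorted_eigenvalues_lap_mat_nth_1_le:
  assumes sym: "\<forall>a b. B a b = B b a" and diag: "\<forall>a. B a a = 0" and m2: "m \<ge> 2"
    and ev: "\<forall>a<m. lap_apply m B y a = \<mu> * y a" and mu: "\<mu> \<ge> 0"
    and ys: "(\<Sum>a<m. y a) = 0" and nz: "\<exists>a<m. y a \<noteq> 0"
  shows "sorted_eigenvalues (lap_mat m B) ! 1 \<le> \<mu>"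
proof -
  let ?p = "char_poly (lap_mat m B)"
  have p0: "?p \<noteq> 0"
    using degree_monic_char_poly[OF lap_mat_carrier, of m B] by auto
  have "\<forall>x. count {#0, \<mu>#} x \<le> order x ?p"
  proof (cases "\<mu> = 0")
    case True
    then have "order 0 ?p \<ge> 2"
      using ev by (intro lap_mat_order_0_ge_2[where B=B, OF sym diag m2 _ ys nz]) simp
    then show ?thesis
      using True by auto
  next
    case False
    have "poly ?p 0 = 0" "poly ?p \<mu> = 0"
      using lap_mat_char_poly_root_0[where B=B, OF diag] lap_mat_char_poly_root[where B=B, OF diag ev nz] m2 by auto
    then have "order 0 ?p \<ge> 1" "order \<mu> ?p \<ge> 1"
      using p0 order_root by (metis less_one linorder_not_le)+
    then show ?thesis
      using False by auto
  qed
  from sorted_eigenvalues_nth_1_le[OF lap_mat_carrier this] show ?thesis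
    using mu by simp
qed

lemma sorted_eigenvalues_lap_mat_nth_1_mult_le:
  assumes sym: "\<forall>a b. B a b = B b a" and nn: "\<forall>a b. B a b \<ge> 0" and diag: "\<forall>a. B a a = 0"
    and m2: "m \<ge> 2" and ys: "(\<Sum>a<m. y a) = 0"
  shows "sorted_eigenvalues (lap_mat m B) ! 1 * (\<Sum>a<m. (y a)^2) \<le> lap_form m B y"
proof -
  obtain x where x0: "(\<Sum>a<m. x a) = 0" and x1: "(\<Sum>a<m. (x a)^2) = 1"
    and min: "\<And>z. (\<Sum>a<m. z a) = 0 \<Longrightarrow> lap_form m B x * (\<Sum>a<m. (z a)^2) \<le> lap_form m B z"
    using lap_form_attains_min_on_zero_sum[OF nn m2] by blast
  have "\<exists>a<m. x a \<noteq> 0"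
  proof (rule ccontr)
    assume "\<not> ?thesis"
    then have "(\<Sum>a<m. (x a)^2) = 0" by simp
    then show False using x1 by simp
  qed
  then have "sorted_eigenvalues (lap_mat m B) ! 1 \<le> lap_form m B x"
    using lap_apply_minimizer[where B=B, OF sym x0 x1 min] lap_form_nonneg[where B=B, OF nn]
    by (intro sorted_eigenvalues_lap_mat_nth_1_le[where B=B, OF sym diag m2 _ _ x0])
  then have "sorted_eigenvalues (lap_mat m B) ! 1 * (\<Sum>a<m. (y a)^2) \<le> lap_form m B x * (\<Sum>a<m. (y a)^2)"
    by (rule mult_right_mono) (simp add: sum_nonneg)
  also have "\<dots> \<le> lap_form m B y"
    using min[OF ys] .
  finally show ?thesis .
qed

lemma sum_sorted_list_of_set:
  assumes "finite C"
  shows "(\<Sum>i\<in>C. f i) = (\<Sum>c<card C. f (sorted_list_of_set C ! c))"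
proof -
  have "bij_betw ((!) (sorted_list_of_set C)) {..<card C} C"
    by (rule bij_betw_nth) (use assms in auto)
  then show ?thesis
    by (simp add: sum.reindex_bij_betw)
qed

lemma laplacian_eq_lap_mat:
  assumes "finite C"
  shows "laplacian A C = lap_mat (card C) (\<lambda>a b. A (sorted_list_of_set C ! a) (sorted_list_of_set C ! b))"
  unfolding laplacian_def lap_mat_def Let_def
  by (rule eq_matI) (auto simp: sum_sorted_list_of_set[OF assms])

definition pair_variation :: "(nat \<Rightarrow> nat \<Rightarrow> real) \<Rightarrow> nat set \<Rightarrow> nat set \<Rightarrow> (nat \<Rightarrow> 'a::real_normed_vector) \<Rightarrow> real" where
  "pair_variation A S T u = (\<Sum>i\<in>S. \<Sum>j\<in>T. A i j * (norm (u i - u j))^2)"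

lemma lambda2_mult_sum_square_le:
  fixes y :: "nat \<Rightarrow> real"
  assumes g: "wgraph n A" and C: "finite C" "card C \<ge> 2" and ys: "(\<Sum>i\<in>C. y i) = 0"
  shows "lambda2 A C * (\<Sum>i\<in>C. (y i)^2) \<le> (\<Sum>i\<in>C. \<Sum>j\<in>C. A i j * (y i - y j)^2) / 2"
proof -
  define e where "e = sorted_list_of_set C"
  define B where "B = (\<lambda>a b. A (e ! a) (e ! b))"
  have "\<forall>a b. B a b = B b a" "\<forall>a b. B a b \<ge> 0" "\<forall>a. B a a = 0"
    using g unfolding wgraph_def B_def by auto
  moreover have "(\<Sum>a<card C. y (e ! a)) = 0"
    using ys unfolding e_def sum_sorted_list_of_set[OF C(1)] .
  ultimately have "sorted_eigenvalues (lap_mat (card C) B) ! 1 * (\<Sum>a<card C. (y (e ! a))^2)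
      \<le> lap_form (card C) B (\<lambda>a. y (e ! a))"
    using C(2) by (intro sorted_eigenvalues_lap_mat_nth_1_mult_le) auto
  then show ?thesis
    unfolding lambda2_def laplacian_eq_lap_mat[OF C(1)] lap_form_def
    by (simp add: sum_sorted_list_of_set[OF C(1)] B_def e_def)
qed

lemma power2_norm_vec_eq_sum: "(norm (x::real^'d))^2 = (\<Sum>k\<in>UNIV. (x$k)^2)"
  unfolding power2_norm_eq_inner inner_vec_def by (simp add: power2_eq_square)

lemma lambda2_mult_sum_norm_le:
  fixes u :: "nat \<Rightarrow> real^'d"
  assumes g: "wgraph n A" and C: "finite C" "card C \<ge> 2" and us: "(\<Sum>i\<in>C. u i) = 0"
  shows "lambda2 A C * (\<Sum>i\<in>C. (norm (u i))^2) \<le> pair_variation A C C u / 2"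
proof -
  have "lambda2 A C * (\<Sum>i\<in>C. (norm (u i))^2) = (\<Sum>k\<in>UNIV. lambda2 A C * (\<Sum>i\<in>C. (u i $ k)^2))"
    unfolding power2_norm_vec_eq_sum by (subst sum.swap) (simp add: sum_distrib_left)
  also have "\<dots> \<le> (\<Sum>k\<in>UNIV. (\<Sum>i\<in>C. \<Sum>j\<in>C. A i j * (u i $ k - u j $ k)^2) / 2)"
  proof (rule sum_mono, rule lambda2_mult_sum_square_le[OF g C])
    fix k show "(\<Sum>i\<in>C. u i $ k) = 0"
      using us by (metis sum_component zero_index)
  qed
  also have "\<dots> = pair_variation A C C u / 2"
    unfolding pair_variation_def power2_norm_vec_eq_sum
    by (simp add: sum_divide_distrib[symmetric] sum_distrib_left)
      (subst sum.swap, rule sum.cong[OF refl], subst sum.swap, simp)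
  finally show ?thesis .
qed

section \<open>Comparison with a competitor\<close>

lemma sum_sum_eq_twice_sum_sum_less:
  fixes h :: "nat \<Rightarrow> nat \<Rightarrow> real"
  assumes sym: "\<forall>i j. h i j = h j i" and diag: "\<forall>i. h i i = 0"
  shows "(\<Sum>i\<in>V. \<Sum>j\<in>V. h i j) = 2 * (\<Sum>i\<in>V. \<Sum>j\<in>V. if i < j then h i j else 0)"
proof -
  have "h i j = (if i < j then h i j else 0) + (if j < i then h j i else 0)" for i j :: nat
    by (cases i j rule: linorder_cases) (use sym diag in auto)
  then have "(\<Sum>i\<in>V. \<Sum>j\<in>V. h i j) = (\<Sum>i\<in>V. \<Sum>j\<in>V. if i < j then h i j else 0)
      + (\<Sum>i\<in>V. \<Sum>j\<in>V. if j < i then h j i else 0)"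
    by (simp add: sum.distrib[symmetric])
  also have "(\<Sum>i\<in>V. \<Sum>j\<in>V. if j < i then h j i else 0) = (\<Sum>i\<in>V. \<Sum>j\<in>V. if i < j then h i j else 0)"
    by (rule sum.swap)
  finally show ?thesis by simp
qed

lemma sum_edges_eq_half_sum:
  assumes g: "wgraph n A" and sym: "\<forall>i j. f i j = f j i"
  shows "(\<Sum>(i,j)\<in>edges n A. A i j * f i j) = (\<Sum>i\<in>{1..n}. \<Sum>j\<in>{1..n}. A i j * f i j) / 2"
proof -
  have Asym: "\<forall>i j. A i j = A j i" and Ann: "\<forall>i j. A i j \<ge> 0" and Adiag: "\<forall>i. A i i = 0"
    using g unfolding wgraph_def by auto
  have "edges n A = {x \<in> {1..n} \<times> {1..n}. fst x < snd x \<and> A (fst x) (snd x) \<noteq> 0}"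
    using Ann unfolding edges_def by (auto simp: less_le)
  then have "(\<Sum>(i,j)\<in>edges n A. A i j * f i j)
      = (\<Sum>x\<in>{1..n} \<times> {1..n}. if fst x < snd x then A (fst x) (snd x) * f (fst x) (snd x) else 0)"
    by (simp add: sum.inter_filter[symmetric] split_beta) (intro sum.mono_neutral_left; auto)
  also have "\<dots> = (\<Sum>i\<in>{1..n}. \<Sum>j\<in>{1..n}. if i < j then A i j * f i j else 0)"
    by (simp add: sum.cartesian_product split_beta)
  also have "\<dots> = (\<Sum>i\<in>{1..n}. \<Sum>j\<in>{1..n}. A i j * f i j) / 2"
    using sum_sum_eq_twice_sum_sum_less[of "\<lambda>i j. A i j * f i j" "{1..n}"] Asym sym Adiag by simp
  finally show ?thesis .
qed

lemma sum_sum_split_subset: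
  fixes h :: "nat \<Rightarrow> nat \<Rightarrow> real"
  assumes fin: "finite V" and sub: "C \<subseteq> V" and sym: "\<forall>i j. h i j = h j i"
  shows "(\<Sum>i\<in>V. \<Sum>j\<in>V. h i j)
    = (\<Sum>i\<in>C. \<Sum>j\<in>C. h i j) + 2 * (\<Sum>i\<in>C. \<Sum>j\<in>V - C. h i j) + (\<Sum>i\<in>V - C. \<Sum>j\<in>V - C. h i j)"
proof -
  have split: "(\<Sum>i\<in>V. f i) = (\<Sum>i\<in>C. f i) + (\<Sum>i\<in>V - C. f i)" for f :: "nat \<Rightarrow> real"
    using sum.subset_diff[OF sub fin] by (simp add: add.commute)
  have "(\<Sum>i\<in>V - C. \<Sum>j\<in>C. h i j) = (\<Sum>i\<in>C. \<Sum>j\<in>V - C. h i j)"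
    by (subst sum.swap) (simp add: sym[rule_format, of _ ])
  then show ?thesis
    by (simp add: split sum.distrib)
qed

lemma gtv_obj_split:
  assumes g: "wgraph n A" and C: "C \<subseteq> {1..n}"
  shows "gtv_obj n A L \<alpha> u = (\<Sum>i\<in>C. L i (u i)) + (\<Sum>i\<in>{1..n} - C. L i (u i))
    + \<alpha> * (pair_variation A C C u / 2 + pair_variation A C ({1..n} - C) u
           + pair_variation A ({1..n} - C) ({1..n} - C) u / 2)"
proof -
  have "\<forall>i j. A i j = A j i"
    using g unfolding wgraph_def by auto
  then have "(\<Sum>i\<in>{1..n}. \<Sum>j\<in>{1..n}. A i j * (norm (u i - u j))^2)
      = pair_variation A C C u + 2 * pair_variation A C ({1..n} - C) u
        + pair_variation A ({1..n} - C) ({1..n} - C) u"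
    unfolding pair_variation_def using C
    by (intro sum_sum_split_subset) (auto simp: norm_minus_commute)
  moreover have "(\<Sum>(i,j)\<in>edges n A. A i j * (norm (u i - u j))^2)
      = (\<Sum>i\<in>{1..n}. \<Sum>j\<in>{1..n}. A i j * (norm (u i - u j))^2) / 2"
    by (rule sum_edges_eq_half_sum[OF g]) (simp add: norm_minus_commute)
  moreover have "(\<Sum>i\<in>{1..n}. L i (u i)) = (\<Sum>i\<in>C. L i (u i)) + (\<Sum>i\<in>{1..n} - C. L i (u i))"
    using sum.subset_diff[OF C] by (simp add: add.commute)
  ultimately show ?thesis
    unfolding gtv_obj_def by simp
qed

lemma power2_norm_diff_le: "(norm (x - y))^2 \<le> 2 * ((norm x)^2 + (norm y)^2)"
proof -
  have "(norm (x - y))^2 \<le> (norm x + norm y)^2"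
    using norm_triangle_ineq4[of x y] by (simp add: power_mono)
  also have "\<dots> \<le> 2 * ((norm x)^2 + (norm y)^2)"
    using zero_le_power2[of "norm x - norm y"] by (simp add: power2_eq_square algebra_simps)
  finally show ?thesis .
qed

lemma pair_variation_boundary_le:
  assumes nn: "\<forall>i j. A i j \<ge> 0" and R: "\<forall>j\<in>{1..n} - C. norm (u j) \<le> R" and uC: "\<forall>i\<in>C. u i = v"
  shows "pair_variation A C ({1..n} - C) u \<le> 2 * boundary_weight n A C * ((norm v)^2 + R^2)"
proof -
  have "(norm (u i - u j))^2 \<le> 2 * ((norm v)^2 + R^2)" if "i \<in> C" "j \<in> {1..n} - C" for i j
  proof -
    have "(norm (u j))^2 \<le> R^2"
      using R that by (simp add: power_mono)
    then show ?thesis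
      using power2_norm_diff_le[of v "u j"] uC that by simp
  qed
  then have "pair_variation A C ({1..n} - C) u \<le> (\<Sum>i\<in>C. \<Sum>j\<in>{1..n} - C. A i j * (2 * ((norm v)^2 + R^2)))"
    unfolding pair_variation_def using nn by (intro sum_mono mult_left_mono) auto
  also have "\<dots> = 2 * boundary_weight n A C * ((norm v)^2 + R^2)"
    unfolding boundary_weight_def by (simp add: sum_distrib_left sum_distrib_right mult_ac)
  finally show ?thesis .
qed

lemma gtvmin_pair_variation_le:
  assumes g: "wgraph n A" and loss_nonneg: "\<forall>i\<in>C. \<forall>v. L i v \<ge> 0" and alpha_pos: "\<alpha> > 0"
    and sol: "is_gtvmin_solution n A L \<alpha> w" and C: "C \<subseteq> {1..n}"
    and eps: "(\<Sum>i\<in>C. L i wbar) \<le> \<epsilon>" and R: "\<forall>i\<in>{1..n} - C. norm (w i) \<le> R"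
  shows "\<alpha> * (pair_variation A C C w / 2) \<le> \<epsilon> + 2 * \<alpha> * boundary_weight n A C * ((norm wbar)^2 + R^2)"
proof -
  let ?Vo = "{1..n} - C"
  define w' where "w' = (\<lambda>i. if i \<in> C then wbar else w i)"
  have nn: "\<forall>i j. A i j \<ge> 0"
    using g unfolding wgraph_def by auto
  have "gtv_obj n A L \<alpha> w \<le> gtv_obj n A L \<alpha> w'"
    using sol unfolding is_gtvmin_solution_def by blast
  moreover have "pair_variation A C C w' = 0" "pair_variation A ?Vo ?Vo w' = pair_variation A ?Vo ?Vo w"
    "(\<Sum>i\<in>?Vo. L i (w' i)) = (\<Sum>i\<in>?Vo. L i (w i))" "(\<Sum>i\<in>C. L i (w' i)) = (\<Sum>i\<in>C. L i wbar)"
    unfolding pair_variation_def w'_def by simp_all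
  ultimately have "(\<Sum>i\<in>C. L i (w i)) + \<alpha> * (pair_variation A C C w / 2) + \<alpha> * pair_variation A C ?Vo w
      \<le> (\<Sum>i\<in>C. L i wbar) + \<alpha> * pair_variation A C ?Vo w'"
    unfolding gtv_obj_split[OF g C] by (simp add: algebra_simps)
  moreover have "0 \<le> (\<Sum>i\<in>C. L i (w i))" "0 \<le> \<alpha> * pair_variation A C ?Vo w"
    using loss_nonneg nn alpha_pos unfolding pair_variation_def by (auto intro!: sum_nonneg mult_nonneg_nonneg)
  ultimately have "\<alpha> * (pair_variation A C C w / 2) \<le> (\<Sum>i\<in>C. L i wbar) + \<alpha> * pair_variation A C ?Vo w'"
    by linarith
  also have "\<alpha> * pair_variation A C ?Vo w' \<le> \<alpha> * (2 * boundary_weight n A C * ((norm wbar)^2 + R^2))"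
    using alpha_pos R by (intro mult_left_mono pair_variation_boundary_le[OF nn]) (auto simp: w'_def)
  finally show ?thesis
    using eps by simp
qed

theorem theorem1:
  fixes n :: nat and A :: "nat \<Rightarrow> nat \<Rightarrow> real"
    and L :: "nat \<Rightarrow> real^'d \<Rightarrow> real" and \<alpha> :: real
    and w :: "nat \<Rightarrow> real^'d" and C :: "nat set"
    and wbar :: "real^'d" and \<epsilon> :: real and R :: real
  assumes graph: "wgraph n A"
    and loss_nonneg: "\<forall>i\<in>{1..n}. \<forall>v. L i v \<ge> 0"
    and alpha_pos: "\<alpha> > 0"
    and sol: "is_gtvmin_solution n A L \<alpha> w"
    and C_sub: "C \<subseteq> {1..n}" and C_ne: "C \<noteq> {}"
    and eps_nonneg: "\<epsilon> \<ge> 0"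
    and eps: "(\<Sum>i\<in>C. L i wbar) \<le> \<epsilon>"
    and C_card: "card C \<ge> 2"
    and lam_pos: "lambda2 A C > 0"
    and R_nonneg: "R \<ge> 0"
    and R_bound: "\<forall>i\<in>{1..n} - C. norm (w i) \<le> R"
  shows "(\<Sum>i\<in>C. (norm (w i - (1 / real (card C)) *\<^sub>R (\<Sum>i'\<in>C. w i')))\<^sup>2)
           \<le> (1 / (\<alpha> * lambda2 A C)) *
             (\<epsilon> + 2 * \<alpha> * boundary_weight n A C * ((norm wbar)\<^sup>2 + R\<^sup>2))"
proof -
  define wt where "wt = (\<lambda>i. w i - (1 / real (card C)) *\<^sub>R (\<Sum>i'\<in>C. w i'))"
  have finC: "finite C"
    using C_sub finite_subset by blast
  have "(\<Sum>i\<in>C. wt i) = 0"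
    using C_card unfolding wt_def by (simp add: sum_subtractf sum_constant_scaleR del: sum_constant)
  then have "lambda2 A C * (\<Sum>i\<in>C. (norm (wt i))^2) \<le> pair_variation A C C wt / 2"
    by (rule lambda2_mult_sum_norm_le[OF graph finC C_card])
  then have "\<alpha> * lambda2 A C * (\<Sum>i\<in>C. (norm (wt i))^2) \<le> \<alpha> * (pair_variation A C C wt / 2)"
    using alpha_pos by (simp add: mult.assoc)
  also have "pair_variation A C C wt = pair_variation A C C w"
    unfolding pair_variation_def wt_def by simp
  also have "\<alpha> * (\<dots> / 2) \<le> \<epsilon> + 2 * \<alpha> * boundary_weight n A C * ((norm wbar)^2 + R^2)"
    using loss_nonneg C_sub by (intro gtvmin_pair_variation_le[OF graph _ alpha_pos sol C_sub eps R_bound]) auto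
  finally show ?thesis
    using alpha_pos lam_pos unfolding wt_def by (simp add: pos_le_divide_eq mult.commute)
qed

end
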